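(* Let $C$ be an open cone in $V$ and let $T$ be an open cone in $V$. Then $T\in\mathscr T(C)$ if and only if the dual cone $T^*$ is an extreme set of $C^*$.
   Context: $V$ is a finite-dimensional real vector space with dual $V^*$. An open cone is a nonempty open convex set $T\subset V$ with $\lambda T\subseteq T$ for all $\lambda>0$ and $0\notin T$; $\partial T$ is its boundary in $V$. Open tangent cone at $x\in\partial T$: $\tau(T,x):=\{\lambda(y-x):\lambda>0,\ y\in T\}$. For a set of cones $\mathbb T$, $\Gamma(\mathbb T):=\{\tau(T,x):T\in\mathbb T,\ x\in\partial T\}$ and $\mathscr T(C):=\bigcup_{k\ge1}\Gamma^k(\{C\})$. Dual cone: $T^*:=\{z\in V^*:\langle z,x\rangle\ge0\ \forall x\in T\}$. A convex subset $E$ of a convex set $K$ is an extreme set if whenever a relative interior point of a line segment in $K$ lies in $E$, both endpoints of the segment lie in $E$. *)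

theory Defs
  imports "HOL-Analysis.Analysis"
begin

text \<open>The finite-dimensional real vector space V is modelled by a type of class
  euclidean_space; the dual space is identified with V via the inner product.\<close>

definition open_cone :: "'a::euclidean_space set \<Rightarrow> bool" where
  "open_cone T \<longleftrightarrow> T \<noteq> {} \<and> open T \<and> convex T \<and>
     (\<forall>c>0. \<forall>x\<in>T. c *\<^sub>R x \<in> T) \<and> 0 \<notin> T"

definition tangent_cone :: "'a::euclidean_space set \<Rightarrow> 'a \<Rightarrow> 'a set" where
  "tangent_cone T x = {c *\<^sub>R (y - x) | c y. c > 0 \<and> y \<in> T}"

definition Gamma :: "'a::euclidean_space set set \<Rightarrow> 'a set set" where
  "Gamma TT = {tangent_cone T x | T x. T \<in> TT \<and> x \<in> frontier T}"

definition tangent_cones_iter :: "'a::euclidean_space set \<Rightarrow> 'a set set" where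
  "tangent_cones_iter C = (\<Union>k\<in>{1..}. (Gamma ^^ k) {C})"

definition dual_cone :: "'a::euclidean_space set \<Rightarrow> 'a set" where
  "dual_cone T = {z. \<forall>x\<in>T. 0 \<le> inner z x}"

end

theory Submission
  imports Defs
begin

text \<open>The dual of the tangent cone of C at a boundary point x is the exposed face of C*
  cut out by the hyperplane orthogonal to x; since faces of faces are faces, every iterated
  tangent cone has a face of C* as its dual. Conversely, a proper face F of C* lies in a proper
  exposed face cut out by the hyperplane orthogonal to some a that is nonnegative on C*. By
  the bipolar theorem a lies in the closure of C, and not in C since F contains nonzero
  vectors; so that exposed face is the dual of the tangent cone of C at the boundary point a,
  and it has smaller dimension than C*. The induction on dim C* ends at F = C*, where T = C
  because an open convex cone is the interior of its bidual cone, and C is its own tangent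
  cone at the boundary point 0.\<close>

lemma frontier_open_eq [simp]: "open S \<Longrightarrow> frontier S = closure S - S"
  by (simp add: frontier_def interior_open)

lemma lower_bound_of_positive_multiples:
  fixes a b :: real
  assumes "\<And>t. t > 0 \<Longrightarrow> b \<le> t * a"
  shows "0 \<le> a" and "b \<le> 0"
proof -
  show "0 \<le> a"
  proof (rule ccontr)
    assume "\<not> 0 \<le> a"
    then have "b \<le> ((\<bar>b\<bar> + 1) / - a) * a"
      by (intro assms divide_pos_pos) auto
    with \<open>\<not> 0 \<le> a\<close> show False
      by simp
  qed
  show "b \<le> 0"
  proof (rule ccontr)
    assume "\<not> b \<le> 0"
    then have "b \<le> (b / (2 * (a + 1))) * a"
      using \<open>0 \<le> a\<close> by (intro assms) simp
    also have "\<dots> < b"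
      using \<open>0 \<le> a\<close> \<open>\<not> b \<le> 0\<close> by (simp add: field_simps add_nonneg_pos)
    finally show False
      by simp
  qed
qed

lemma open_cone_lower_bound_imp_dual:
  assumes "open_cone C" and "\<And>y. y \<in> C \<Longrightarrow> b \<le> w \<bullet> y"
  shows "w \<in> dual_cone C" and "b \<le> 0"
proof -
  have bound: "b \<le> t * (w \<bullet> y)" if "t > 0" "y \<in> C" for t y
    using assms that unfolding open_cone_def by (metis inner_scaleR_right)
  then have "0 \<le> w \<bullet> y" if "y \<in> C" for y
    using lower_bound_of_positive_multiples(1)[of b "w \<bullet> y"] that by blast
  then show "w \<in> dual_cone C"
    unfolding dual_cone_def by blast
  obtain y where "y \<in> C"
    using assms(1) unfolding open_cone_def by blast
  then show "b \<le> 0"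
    using lower_bound_of_positive_multiples(2)[of b "w \<bullet> y"] bound by blast
qed

lemma convex_dual_cone: "convex (dual_cone T)"
  unfolding dual_cone_def convex_def
  by (auto simp: inner_add_left intro!: add_nonneg_nonneg mult_nonneg_nonneg)

lemma zero_in_dual_cone: "0 \<in> dual_cone T"
  unfolding dual_cone_def by simp

lemma dual_cone_nonneg_on_closure:
  assumes "z \<in> dual_cone T" and "x \<in> closure T"
  shows "0 \<le> z \<bullet> x"
proof -
  have "closure T \<subseteq> {w. 0 \<le> z \<bullet> w}"
    using assms(1) unfolding dual_cone_def
    by (intro closure_minimal) (auto intro!: closed_Collect_le continuous_intros)
  with assms(2) show ?thesis
    by auto
qed

lemma dual_cone_inner_pos:
  assumes "open C" and "z \<in> dual_cone C" and "z \<noteq> 0" and "x \<in> C"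
  shows "0 < z \<bullet> x"
proof (rule ccontr)
  assume "\<not> 0 < z \<bullet> x"
  obtain e where "e > 0" and "ball x e \<subseteq> C"
    using assms by (meson open_contains_ball)
  define y where "y = x - (e / (2 * norm z)) *\<^sub>R z"
  have "y \<in> C"
    using \<open>e > 0\<close> \<open>ball x e \<subseteq> C\<close> \<open>z \<noteq> 0\<close> by (auto simp: y_def dist_norm)
  then have "0 \<le> z \<bullet> y"
    using assms(2) unfolding dual_cone_def by auto
  moreover have "z \<bullet> y = z \<bullet> x - (e / (2 * norm z)) * (z \<bullet> z)"
    by (simp add: y_def inner_diff_right)
  moreover have "(e / (2 * norm z)) * (z \<bullet> z) > 0"
    using \<open>e > 0\<close> \<open>z \<noteq> 0\<close> by simp
  ultimately show False
    using \<open>\<not> 0 < z \<bullet> x\<close> by linarith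
qed

lemma dual_cone_ne_singleton_zero:
  assumes "convex T" and "0 \<notin> T"
  shows "dual_cone T \<noteq> {0}"
  using separating_hyperplane_set_0[OF assms] unfolding dual_cone_def by auto

lemma closure_open_cone_eq_bidual:
  assumes "open_cone C"
  shows "closure C = {a. \<forall>z\<in>dual_cone C. 0 \<le> a \<bullet> z}"
proof
  show "closure C \<subseteq> {a. \<forall>z\<in>dual_cone C. 0 \<le> a \<bullet> z}"
    using dual_cone_nonneg_on_closure by (fastforce simp: inner_commute)
  show "{a. \<forall>z\<in>dual_cone C. 0 \<le> a \<bullet> z} \<subseteq> closure C"
  proof
    fix a
    assume a: "a \<in> {a. \<forall>z\<in>dual_cone C. 0 \<le> a \<bullet> z}"
    show "a \<in> closure C"
    proof (rule ccontr)
      assume "a \<notin> closure C"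
      moreover have "convex (closure C)"
        using assms by (simp add: open_cone_def convex_closure)
      ultimately obtain w b where "w \<bullet> a < b" and wb: "\<forall>x\<in>closure C. b < w \<bullet> x"
        using separating_hyperplane_closed_point[of "closure C" a] by auto
      have "w \<in> dual_cone C" and "b \<le> 0"
        using open_cone_lower_bound_imp_dual[OF assms, of b w] wb closure_subset
        by (fastforce intro: less_imp_le)+
      with a \<open>w \<bullet> a < b\<close> show False
        by (force simp: inner_commute)
    qed
  qed
qed

lemma open_cone_dual_cone_inj:
  assumes "open_cone C" and "open_cone T" and "dual_cone T = dual_cone C"
  shows "T = C"
proof -
  have "C = interior (closure C)" if "open_cone C" for C :: "'a set"
    using that by (simp add: open_cone_def convex_interior_closure interior_open)
  then show ?thesis
    using assms by (metis closure_open_cone_eq_bidual)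
qed

lemma open_cone_positive_multiples:
  assumes "S \<noteq> {}" and "open S" and "convex S" and "0 \<notin> S"
  shows "open_cone {c *\<^sub>R y | c y. c > 0 \<and> y \<in> S}" (is "open_cone ?K")
proof -
  have "?K = (\<Union>c\<in>{0<..}. (\<lambda>y. c *\<^sub>R y) ` S)"
    by auto
  then have "open ?K"
    using \<open>open S\<close> by (auto intro!: open_UN open_scaling)
  moreover have "convex ?K"
    unfolding convex_def
  proof (intro allI impI ballI)
    fix u v and p q :: real
    assume "u \<in> ?K" "v \<in> ?K" and pq: "0 \<le> p" "0 \<le> q" "p + q = 1"
    then obtain c1 y1 c2 y2 where 1: "c1 > 0" "y1 \<in> S" "u = c1 *\<^sub>R y1"
      and 2: "c2 > 0" "y2 \<in> S" "v = c2 *\<^sub>R y2"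
      by auto
    define s where "s = p * c1 + q * c2"
    have "s > 0"
      using pq 1 2 unfolding s_def by (smt (verit) mult_pos_pos mult_nonneg_nonneg)
    have "(p * c1 / s) *\<^sub>R y1 + (q * c2 / s) *\<^sub>R y2 \<in> S"
      using 1 2 pq \<open>s > 0\<close>
      by (intro convexD[OF \<open>convex S\<close>]) (auto simp: s_def add_divide_distrib[symmetric])
    moreover have "p *\<^sub>R u + q *\<^sub>R v = s *\<^sub>R ((p * c1 / s) *\<^sub>R y1 + (q * c2 / s) *\<^sub>R y2)"
      using \<open>s > 0\<close> 1 2 by (simp add: scaleR_add_right)
    ultimately show "p *\<^sub>R u + q *\<^sub>R v \<in> ?K"
      using \<open>s > 0\<close> by blast
  qed
  moreover have "\<forall>c>0. \<forall>v\<in>?K. c *\<^sub>R v \<in> ?K"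
    by clarsimp (metis mult_pos_pos scaleR_scaleR)
  moreover obtain y where "y \<in> S"
    using assms(1) by blast
  then have "y \<in> ?K"
    by (metis (mono_tags, lifting) mem_Collect_eq scaleR_one zero_less_one)
  moreover have "0 \<notin> ?K"
    using assms(4) by auto
  ultimately show ?thesis
    unfolding open_cone_def by auto
qed

lemma open_cone_tangent_cone:
  assumes "open_cone C" and "x \<notin> C"
  shows "open_cone (tangent_cone C x)"
proof -
  have "tangent_cone C x = {c *\<^sub>R y | c y. c > 0 \<and> y \<in> (\<lambda>y. y - x) ` C}"
    unfolding tangent_cone_def by auto
  moreover have "(\<lambda>y. y - x) ` C \<noteq> {}" and "open ((\<lambda>y. y - x) ` C)"
    and "convex ((\<lambda>y. y - x) ` C)" and "0 \<notin> (\<lambda>y. y - x) ` C"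
    using assms unfolding open_cone_def
    by (auto intro: open_translation_subtract convex_translation_subtract)
  ultimately show ?thesis
    using open_cone_positive_multiples by (simp only:)
qed

lemma dual_cone_tangent_cone:
  assumes "open_cone C" and "x \<in> closure C"
  shows "dual_cone (tangent_cone C x) = dual_cone C \<inter> {z. x \<bullet> z = 0}"
proof
  show "dual_cone C \<inter> {z. x \<bullet> z = 0} \<subseteq> dual_cone (tangent_cone C x)"
    unfolding dual_cone_def tangent_cone_def by (auto simp: inner_diff_right inner_commute)
  show "dual_cone (tangent_cone C x) \<subseteq> dual_cone C \<inter> {z. x \<bullet> z = 0}"
  proof
    fix z
    assume z: "z \<in> dual_cone (tangent_cone C x)"
    have "z \<bullet> x \<le> z \<bullet> y" if "y \<in> C" for y
    proof -
      have "y - x \<in> tangent_cone C x"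
        using that unfolding tangent_cone_def by (auto intro!: exI[of _ 1])
      with z show ?thesis
        unfolding dual_cone_def by (auto simp: inner_diff_right)
    qed
    then have "z \<in> dual_cone C" and "z \<bullet> x \<le> 0"
      using open_cone_lower_bound_imp_dual[OF assms(1)] by blast+
    moreover have "0 \<le> z \<bullet> x"
      using dual_cone_nonneg_on_closure[OF \<open>z \<in> dual_cone C\<close> assms(2)] .
    ultimately show "z \<in> dual_cone C \<inter> {z. x \<bullet> z = 0}"
      by (simp add: inner_commute)
  qed
qed

lemma dual_cone_tangent_cone_face_of:
  assumes "open_cone C" and "x \<in> closure C"
  shows "dual_cone (tangent_cone C x) face_of dual_cone C"
  unfolding dual_cone_tangent_cone[OF assms]
  using dual_cone_nonneg_on_closure[OF _ assms(2)]
  by (intro face_of_Int_supporting_hyperplane_ge convex_dual_cone) (simp add: inner_commute)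

lemma open_cone_in_Gamma:
  assumes "open_cone C"
  shows "C \<in> Gamma {C}"
proof -
  have scale: "\<And>c y. c > 0 \<Longrightarrow> y \<in> C \<Longrightarrow> c *\<^sub>R y \<in> C"
    using assms unfolding open_cone_def by auto
  obtain y where "y \<in> C"
    using assms unfolding open_cone_def by auto
  have "(\<lambda>n. (1 / real (Suc n)) *\<^sub>R y) \<longlonglongrightarrow> 0"
    using tendsto_scaleR[OF LIMSEQ_Suc[OF lim_const_over_n] tendsto_const, of 1 y] by simp
  then have "0 \<in> closure C"
    using scale \<open>y \<in> C\<close> unfolding closure_sequential
    by (auto intro!: exI[of _ "\<lambda>n. (1 / real (Suc n)) *\<^sub>R y"])
  then have "0 \<in> frontier C"
    using assms by (simp add: open_cone_def)
  moreover have "tangent_cone C 0 = C"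
    unfolding tangent_cone_def using scale by (auto intro!: exI[of _ 1])
  ultimately show ?thesis
    unfolding Gamma_def by force
qed

lemma funpow_Gamma_mono: "A \<subseteq> B \<Longrightarrow> (Gamma ^^ k) A \<subseteq> (Gamma ^^ k) B"
proof (induction k)
  case (Suc k)
  then show ?case
    unfolding Gamma_def by auto
qed simp

lemma tangent_cones_iter_trans:
  assumes "C' \<in> Gamma {C}" and "T \<in> tangent_cones_iter C'"
  shows "T \<in> tangent_cones_iter C"
proof -
  obtain k where "k \<ge> 1" and "T \<in> (Gamma ^^ k) {C'}"
    using assms(2) unfolding tangent_cones_iter_def by auto
  moreover have "(Gamma ^^ k) {C'} \<subseteq> (Gamma ^^ Suc k) {C}"
    using funpow_Gamma_mono[of "{C'}" "Gamma {C}" k] assms(1)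
    by (simp add: funpow_Suc_right del: funpow.simps)
  ultimately show ?thesis
    unfolding tangent_cones_iter_def by (auto intro!: bexI[of _ "Suc k"])
qed

lemma funpow_Gamma_open_cone_dual_face_of:
  assumes "open_cone C" and "T \<in> (Gamma ^^ k) {C}"
  shows "open_cone T \<and> dual_cone T face_of dual_cone C"
  using assms(2)
proof (induction k arbitrary: T)
  case 0
  then show ?case
    using assms(1) by (simp add: face_of_refl convex_dual_cone)
next
  case (Suc k)
  then have "T \<in> Gamma ((Gamma ^^ k) {C})"
    by simp
  then obtain S x where S: "S \<in> (Gamma ^^ k) {C}" and "x \<in> frontier S" and T: "T = tangent_cone S x"
    unfolding Gamma_def by blast
  then have "open_cone S" and "dual_cone S face_of dual_cone C" and "x \<in> closure S" "x \<notin> S"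
    using Suc.IH by (auto simp: open_cone_def)
  then show ?case
    using T open_cone_tangent_cone dual_cone_tangent_cone_face_of face_of_trans by blast
qed

lemma proper_face_of_subset_exposed_face:
  fixes K F :: "'a::euclidean_space set"
  assumes "convex K" and "F face_of K" and "F \<noteq> {}" and "F \<noteq> K"
  obtains a b where "F \<subseteq> {y. a \<bullet> y = b}" and "\<And>y. y \<in> K \<Longrightarrow> b \<le> a \<bullet> y"
    and "K \<inter> {y. a \<bullet> y = b} \<noteq> K"
proof -
  obtain z where z: "z \<in> rel_interior F"
    using assms face_of_imp_convex rel_interior_eq_empty by blast
  then have "z \<in> K" and "z \<notin> rel_interior K"
    using assms face_of_imp_subset face_of_disjoint_rel_interior rel_interior_subset by blast+
  then obtain a where a: "\<And>y. y \<in> K \<Longrightarrow> a \<bullet> z \<le> a \<bullet> y"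
    and strict: "\<And>y. y \<in> rel_interior K \<Longrightarrow> a \<bullet> z < a \<bullet> y"
    using supporting_hyperplane_rel_boundary[OF assms(1)] by blast
  have "K \<inter> {y. a \<bullet> y = a \<bullet> z} face_of K"
    using face_of_Int_supporting_hyperplane_ge[OF assms(1)] a by blast
  then have "F \<subseteq> {y. a \<bullet> y = a \<bullet> z}"
    using subset_of_face_of[of _ K F] assms(2) face_of_imp_subset z rel_interior_subset by blast
  moreover obtain y where "y \<in> rel_interior K"
    using assms(1) \<open>z \<in> K\<close> rel_interior_eq_empty by blast
  then have "y \<in> K" and "a \<bullet> y \<noteq> a \<bullet> z"
    using strict rel_interior_subset by (blast, fastforce)
  then have "K \<inter> {y. a \<bullet> y = a \<bullet> z} \<noteq> K"
    by blast
  ultimately show ?thesis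
    using a by (intro that[of a "a \<bullet> z"]) auto
qed

lemma proper_face_of_dual_cone_subset_tangent:
  assumes C: "open_cone C" and T: "open_cone T"
    and F: "dual_cone T face_of dual_cone C" "dual_cone T \<noteq> dual_cone C"
  obtains a where "a \<in> frontier C"
    and "dual_cone T \<subseteq> dual_cone (tangent_cone C a)"
    and "dual_cone (tangent_cone C a) \<noteq> dual_cone C"
proof -
  have "dual_cone T \<noteq> {}"
    using zero_in_dual_cone by blast
  obtain a b where sub: "dual_cone T \<subseteq> {y. a \<bullet> y = b}"
    and ge: "\<And>y. y \<in> dual_cone C \<Longrightarrow> b \<le> a \<bullet> y"
    and ne: "dual_cone C \<inter> {y. a \<bullet> y = b} \<noteq> dual_cone C"
    by (rule proper_face_of_subset_exposed_face[OF convex_dual_cone F(1) \<open>dual_cone T \<noteq> {}\<close> F(2)])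
      (rule that)
  have "b = 0"
    using subsetD[OF sub zero_in_dual_cone] by simp
  have "\<forall>z\<in>dual_cone C. 0 \<le> a \<bullet> z"
    using ge \<open>b = 0\<close> by blast
  then have "a \<in> closure C"
    unfolding closure_open_cone_eq_bidual[OF C] by blast
  moreover have "a \<notin> C"
  proof
    assume "a \<in> C"
    have "convex T" and "0 \<notin> T" and "open C"
      using T C unfolding open_cone_def by auto
    obtain z where "z \<in> dual_cone T" and "z \<noteq> 0"
      using dual_cone_ne_singleton_zero[OF \<open>convex T\<close> \<open>0 \<notin> T\<close>] zero_in_dual_cone by blast
    then have "z \<in> dual_cone C"
      using F(1) face_of_imp_subset by blast
    then have "0 < z \<bullet> a"
      by (rule dual_cone_inner_pos[OF \<open>open C\<close> _ \<open>z \<noteq> 0\<close> \<open>a \<in> C\<close>])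
    moreover have "a \<bullet> z = 0"
      using sub \<open>z \<in> dual_cone T\<close> \<open>b = 0\<close> by auto
    ultimately show False
      by (simp add: inner_commute)
  qed
  ultimately have "a \<in> frontier C"
    using C by (simp add: open_cone_def)
  moreover have "dual_cone (tangent_cone C a) = dual_cone C \<inter> {y. a \<bullet> y = 0}"
    by (rule dual_cone_tangent_cone[OF C \<open>a \<in> closure C\<close>])
  moreover have "dual_cone T \<subseteq> dual_cone C \<inter> {y. a \<bullet> y = 0}"
    using F(1) face_of_imp_subset sub \<open>b = 0\<close> by blast
  ultimately show ?thesis
    using ne \<open>b = 0\<close> that[of a] by simp
qed

lemma dual_cone_face_of_imp_tangent_cones_iter:
  assumes "open_cone C" and "open_cone T" and "dual_cone T face_of dual_cone C"
  shows "T \<in> tangent_cones_iter C"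
  using assms
proof (induction "nat (aff_dim (dual_cone C))" arbitrary: C rule: less_induct)
  case less
  show ?case
  proof (cases "dual_cone T = dual_cone C")
    case True
    then have "T = C"
      using open_cone_dual_cone_inj less.prems by blast
    then show ?thesis
      using open_cone_in_Gamma[OF less.prems(1)] unfolding tangent_cones_iter_def
      by (auto intro!: bexI[of _ 1])
  next
    case False
    then obtain a where a: "a \<in> frontier C" and sub: "dual_cone T \<subseteq> dual_cone (tangent_cone C a)"
      and ne: "dual_cone (tangent_cone C a) \<noteq> dual_cone C"
      using proper_face_of_dual_cone_subset_tangent less.prems by blast
    let ?C' = "tangent_cone C a"
    have "a \<in> closure C" and "a \<notin> C"
      using a less.prems(1) by (auto simp: open_cone_def)
    then have "open_cone ?C'" and "dual_cone ?C' face_of dual_cone C"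
      using less.prems(1) open_cone_tangent_cone dual_cone_tangent_cone_face_of by blast+
    then have "aff_dim (dual_cone ?C') < aff_dim (dual_cone C)" and "dual_cone T face_of dual_cone ?C'"
      using face_of_aff_dim_lt[OF convex_dual_cone _ ne] face_of_subset[OF less.prems(3) sub]
        face_of_imp_subset by blast+
    moreover have "0 \<le> aff_dim (dual_cone ?C')"
      using zero_in_dual_cone aff_dim_negative_iff by (metis empty_iff not_le)
    ultimately have "T \<in> tangent_cones_iter ?C'"
      using less.hyps \<open>open_cone ?C'\<close> less.prems(2) by auto
    moreover have "?C' \<in> Gamma {C}"
      unfolding Gamma_def using a by blast
    ultimately show ?thesis
      using tangent_cones_iter_trans by blast
  qed
qed

theorem mainTheorem13:
  fixes C T :: "'a::euclidean_space set"
  assumes "open_cone C" and "open_cone T"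
  shows "T \<in> tangent_cones_iter C \<longleftrightarrow> dual_cone T face_of dual_cone C"
proof
  assume "T \<in> tangent_cones_iter C"
  then obtain k where "T \<in> (Gamma ^^ k) {C}"
    unfolding tangent_cones_iter_def by auto
  then show "dual_cone T face_of dual_cone C"
    using funpow_Gamma_open_cone_dual_face_of[OF assms(1)] by blast
next
  assume "dual_cone T face_of dual_cone C"
  then show "T \<in> tangent_cones_iter C"
    using dual_cone_face_of_imp_tangent_cones_iter assms by blast
qed

end
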